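(* Let $G$ be a nice graph of size $m$ and maximum degree $\Delta$. (1) If $x$ is the minimum label sum of a proper labelling of $G$, then $x \leq {\rm ML}^{\rm W}(G)+m \leq 3(m+\Delta x)$. (2) $\chi'_{\rm s}(G) \leq {\rm ME}^{\rm W}(G)+1 \leq 3(1+\Delta\chi'_{\rm s}(G))$. (3) If $x$ is the minimum vertex sum of a proper labelling of $G$, then $x \leq {\rm MV}^{\rm W}(G)+\Delta \leq 3\Delta(1+x)$.
   Context: All graphs are finite and simple. A walk of a graph $G$ is a sequence of vertices $u_0u_1\dots u_p$ with $u_tu_{t+1}\in E(G)$ for all $t$ (vertices and edges may repeat); its length is $p$. For a walk $W$ of $G$, $G+W$ is the multigraph on $V(G)$ whose edge multiset consists of $E(G)$ together with each edge added as many times as $W$ traverses it. A multigraph is locally irregular if no two adjacent vertices have the same degree; $W$ is irregularising if $G+W$ is locally irregular. A graph is nice if it is connected and not isomorphic to $K_2$. ${\rm ML}^{\rm W}(G)$ is the minimum length of an irregularising walk of $G$; ${\rm ME}^{\rm W}(G)$ is the minimum, over irregularising walks $W$, of the maximum number of times $W$ traverses an edge; ${\rm MV}^{\rm W}(G)$ is the minimum, over irregularising walks $W$, of the maximum over vertices $v$ of the number of edges of $W$ (with multiplicity) incident to $v$. A labelling of $G$ is a map $\ell:E(G)\to\{1,2,\dots\}$; for a vertex $u$, $\sigma_\ell(u)=\sum_{v\in N(u)}\ell(uv)$; $\ell$ is proper if $\sigma_\ell(u)\ne\sigma_\ell(v)$ for all $uv\in E(G)$. $\chi'_{\rm s}(G)$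 is the smallest $k$ such that $G$ has a proper labelling with labels in $\{1,\dots,k\}$. The label sum of $\ell$ is $\sum_{e\in E(G)}\ell(e)$; the vertex sum of $\ell$ is $\max_{u\in V(G)}\sigma_\ell(u)$; the minimum label sum (resp. minimum vertex sum) of a proper labelling of $G$ is the minimum of these quantities over proper labellings of $G$. *)

theory Defs
  imports Main
begin

definition simple_graph :: "'a set \<Rightarrow> 'a set set \<Rightarrow> bool" where
  "simple_graph V E \<longleftrightarrow> finite V \<and>
     (\<forall>e\<in>E. \<exists>u v. e = {u, v} \<and> u \<noteq> v \<and> u \<in> V \<and> v \<in> V)"

definition adj :: "'a set set \<Rightarrow> 'a \<Rightarrow> 'a \<Rightarrow> bool" where
  "adj E u v \<longleftrightarrow> {u, v} \<in> E"

definition connected_graph :: "'a set \<Rightarrow> 'a set set \<Rightarrow> bool" where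
  "connected_graph V E \<longleftrightarrow> V \<noteq> {} \<and>
     (\<forall>u\<in>V. \<forall>v\<in>V. (u, v) \<in> {(x, y). adj E x y}\<^sup>*)"

definition is_K2 :: "'a set \<Rightarrow> 'a set set \<Rightarrow> bool" where
  "is_K2 V E \<longleftrightarrow> card V = 2 \<and> card E = 1"

definition nice_graph :: "'a set \<Rightarrow> 'a set set \<Rightarrow> bool" where
  "nice_graph V E \<longleftrightarrow> simple_graph V E \<and> connected_graph V E \<and> \<not> is_K2 V E"

definition degree :: "'a set set \<Rightarrow> 'a \<Rightarrow> nat" where
  "degree E v = card {e\<in>E. v \<in> e}"

definition max_degree :: "'a set \<Rightarrow> 'a set set \<Rightarrow> nat" where
  "max_degree V E = Max (insert 0 (degree E ` V))"

definition is_walk :: "'a set \<Rightarrow> 'a set set \<Rightarrow> 'a list \<Rightarrow> bool" where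
  "is_walk V E ws \<longleftrightarrow> ws \<noteq> [] \<and> set ws \<subseteq> V \<and>
     (\<forall>i < length ws - 1. {ws ! i, ws ! Suc i} \<in> E)"

definition walk_length :: "'a list \<Rightarrow> nat" where
  "walk_length ws = length ws - 1"

definition walk_edge_count :: "'a list \<Rightarrow> 'a set \<Rightarrow> nat" where
  "walk_edge_count ws e = card {i. i < length ws - 1 \<and> {ws ! i, ws ! Suc i} = e}"

definition walk_vertex_count :: "'a list \<Rightarrow> 'a \<Rightarrow> nat" where
  "walk_vertex_count ws v = card {i. i < length ws - 1 \<and> v \<in> {ws ! i, ws ! Suc i}}"

text \<open>Degree of v in the multigraph G + W.\<close>
definition plus_walk_degree :: "'a set set \<Rightarrow> 'a list \<Rightarrow> 'a \<Rightarrow> nat" where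
  "plus_walk_degree E ws v = degree E v + walk_vertex_count ws v"

definition irregularising :: "'a set \<Rightarrow> 'a set set \<Rightarrow> 'a list \<Rightarrow> bool" where
  "irregularising V E ws \<longleftrightarrow> is_walk V E ws \<and>
     (\<forall>u v. {u, v} \<in> E \<longrightarrow> plus_walk_degree E ws u \<noteq> plus_walk_degree E ws v)"

definition walk_max_edge :: "'a set set \<Rightarrow> 'a list \<Rightarrow> nat" where
  "walk_max_edge E ws = Max (insert 0 (walk_edge_count ws ` E))"

definition walk_max_vertex :: "'a set \<Rightarrow> 'a list \<Rightarrow> nat" where
  "walk_max_vertex V ws = Max (insert 0 (walk_vertex_count ws ` V))"

definition min_len_W :: "'a set \<Rightarrow> 'a set set \<Rightarrow> nat" where
  "min_len_W V E = (LEAST n. \<exists>ws. irregularising V E ws \<and> walk_length ws = n)"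

definition min_edge_W :: "'a set \<Rightarrow> 'a set set \<Rightarrow> nat" where
  "min_edge_W V E = (LEAST n. \<exists>ws. irregularising V E ws \<and> walk_max_edge E ws = n)"

definition min_vert_W :: "'a set \<Rightarrow> 'a set set \<Rightarrow> nat" where
  "min_vert_W V E = (LEAST n. \<exists>ws. irregularising V E ws \<and> walk_max_vertex V ws = n)"

text \<open>A labelling assigns positive integers to the edges; values off E are irrelevant.\<close>
definition labelling :: "'a set set \<Rightarrow> ('a set \<Rightarrow> nat) \<Rightarrow> bool" where
  "labelling E l \<longleftrightarrow> (\<forall>e\<in>E. 1 \<le> l e)"

definition sigma :: "'a set set \<Rightarrow> ('a set \<Rightarrow> nat) \<Rightarrow> 'a \<Rightarrow> nat" where
  "sigma E l u = (\<Sum>e\<in>{e\<in>E. u \<in> e}. l e)"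

definition proper_labelling :: "'a set set \<Rightarrow> ('a set \<Rightarrow> nat) \<Rightarrow> bool" where
  "proper_labelling E l \<longleftrightarrow> labelling E l \<and>
     (\<forall>u v. {u, v} \<in> E \<longrightarrow> sigma E l u \<noteq> sigma E l v)"

definition chi_s :: "'a set set \<Rightarrow> nat" where
  "chi_s E = (LEAST k. \<exists>l. proper_labelling E l \<and> (\<forall>e\<in>E. l e \<le> k))"

definition label_sum :: "'a set set \<Rightarrow> ('a set \<Rightarrow> nat) \<Rightarrow> nat" where
  "label_sum E l = (\<Sum>e\<in>E. l e)"

definition vertex_sum :: "'a set \<Rightarrow> 'a set set \<Rightarrow> ('a set \<Rightarrow> nat) \<Rightarrow> nat" where
  "vertex_sum V E l = Max (insert 0 (sigma E l ` V))"

definition min_label_sum :: "'a set set \<Rightarrow> nat" where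
  "min_label_sum E = (LEAST x. \<exists>l. proper_labelling E l \<and> label_sum E l = x)"

definition min_vertex_sum :: "'a set \<Rightarrow> 'a set set \<Rightarrow> nat" where
  "min_vertex_sum V E = (LEAST x. \<exists>l. proper_labelling E l \<and> vertex_sum V E l = x)"

end

theory Submission
  imports Defs "HOL-Library.Multiset" "HOL-Library.Nat_Bijection"
begin

text \<open>
  If \<open>W\<close> is irregularising, then labelling each edge by one plus the number of times \<open>W\<close>
  traverses it is proper: the label sum at \<open>u\<close> is exactly the degree of \<open>u\<close> in \<open>G + W\<close>.
  Conversely, given a proper labelling \<open>\<ell>\<close>, double a spanning tree and insert back-and-forth
  detours to obtain a walk traversing every edge exactly \<open>2\<Delta>\<ell>(e)\<close> times. In \<open>G + W\<close> the
  vertex \<open>u\<close> then has degree \<open>d(u) + 2\<Delta>\<sigma>\<^sub>\<ell>(u)\<close> with \<open>d(u) < 2\<Delta>\<close>, so \<open>\<sigma>\<^sub>\<ell>(u)\<close> is its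
  quotient by \<open>2\<Delta>\<close> and adjacent vertices get different degrees. Comparing length, maximal
  edge multiplicity and maximal vertex load of the walk with label sum, maximal label and
  vertex sum of the labelling gives all six inequalities (the upper ones even with the factor
  \<open>2\<Delta>\<close> in place of \<open>3\<Delta>\<close>). Proper labellings of nice graphs exist: labelling edge \<open>e\<^sub>i\<close> by
  \<open>2\<^sup>i\<close> makes \<open>\<sigma>(u)\<close> encode the set of edges at \<open>u\<close>, and two adjacent vertices with the
  same incident edges only occur in \<open>K\<^sub>2\<close>.
\<close>

section \<open>Edges traversed by a walk\<close>

fun walk_edges :: "'a list \<Rightarrow> 'a set list" where
  "walk_edges (x # y # ws) = {x, y} # walk_edges (y # ws)"
| "walk_edges _ = []"

lemma length_walk_edges [simp]: "length (walk_edges ws) = length ws - 1"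
  by (induction ws rule: walk_edges.induct) auto

lemma nth_walk_edges: "i < length ws - 1 \<Longrightarrow> walk_edges ws ! i = {ws ! i, ws ! Suc i}"
proof (induction ws arbitrary: i rule: walk_edges.induct)
  case (1 x y ws)
  then show ?case by (cases i) auto
qed auto

lemma walk_edges_append: "walk_edges (xs @ u # ys) = walk_edges (xs @ [u]) @ walk_edges (u # ys)"
proof (induction xs)
  case (Cons x xs)
  then show ?case by (cases xs) auto
qed auto

lemma walk_edges_subset: "e \<in> set (walk_edges ws) \<Longrightarrow> e \<subseteq> set ws"
  by (induction ws rule: walk_edges.induct) auto

lemma card_walk_steps:
  "card {i. i < length ws - 1 \<and> P {ws ! i, ws ! Suc i}} = length (filter P (walk_edges ws))"
  unfolding length_filter_conv_card by (rule arg_cong[where f = card]) (auto simp: nth_walk_edges)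

lemma walk_length_eq: "walk_length ws = length (walk_edges ws)"
  by (simp add: walk_length_def)

lemma walk_edge_count_eq: "walk_edge_count ws e = count (mset (walk_edges ws)) e"
proof -
  have "walk_edge_count ws e = length (filter (\<lambda>x. x = e) (walk_edges ws))"
    unfolding walk_edge_count_def by (rule card_walk_steps)
  then show ?thesis
    by (metis filter_eq_replicate_mset mset_filter size_mset size_replicate_mset)
qed

lemma is_walk_iff: "is_walk V E ws \<longleftrightarrow> ws \<noteq> [] \<and> set ws \<subseteq> V \<and> set (walk_edges ws) \<subseteq> E"
  unfolding is_walk_def set_conv_nth[of "walk_edges ws"] by (auto simp: nth_walk_edges)

lemma walk_length_eq_sum:
  assumes "set (walk_edges ws) \<subseteq> E" "finite E"
  shows "walk_length ws = (\<Sum>e\<in>E. walk_edge_count ws e)"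
  using sum_count_set[OF assms] by (simp add: walk_length_eq walk_edge_count_eq count_mset)

lemma walk_vertex_count_eq_sum:
  assumes "set (walk_edges ws) \<subseteq> E" "finite E"
  shows "walk_vertex_count ws v = (\<Sum>e | e \<in> E \<and> v \<in> e. walk_edge_count ws e)"
proof -
  let ?xs = "filter (\<lambda>e. v \<in> e) (walk_edges ws)"
  have "walk_vertex_count ws v = length ?xs"
    using card_walk_steps[of ws "\<lambda>e. v \<in> e"] by (simp add: walk_vertex_count_def)
  also have "\<dots> = (\<Sum>e | e \<in> E \<and> v \<in> e. count_list ?xs e)"
    using assms by (intro sum_count_set[symmetric]) auto
  also have "\<dots> = (\<Sum>e | e \<in> E \<and> v \<in> e. walk_edge_count ws e)"
    by (intro sum.cong) (auto simp: walk_edge_count_eq count_mset[symmetric])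
  finally show ?thesis .
qed

lemma walk_length_eq_mult_label_sum:
  assumes "set (walk_edges ws) \<subseteq> E" "finite E" "\<forall>e\<in>E. walk_edge_count ws e = k * l e"
  shows "walk_length ws = k * label_sum E l"
  using assms by (simp add: walk_length_eq_sum label_sum_def sum_distrib_left)

lemma walk_vertex_count_eq_mult_sigma:
  assumes "set (walk_edges ws) \<subseteq> E" "finite E" "\<forall>e\<in>E. walk_edge_count ws e = k * l e"
  shows "walk_vertex_count ws u = k * sigma E l u"
  using assms by (simp add: walk_vertex_count_eq_sum sigma_def sum_distrib_left)

lemma walk_detour:
  assumes "u \<in> set ws"
  obtains ws' where "set ws' = insert v (set ws)"
    and "mset (walk_edges ws') = mset (walk_edges ws) + {#{u, v}, {u, v}#}"
proof -
  obtain xs ys where ws: "ws = xs @ u # ys" using split_list[OF assms] by blast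
  show thesis
  proof
    show "set (xs @ u # v # u # ys) = insert v (set ws)" using ws by auto
    show "mset (walk_edges (xs @ u # v # u # ys)) = mset (walk_edges ws) + {#{u, v}, {u, v}#}"
      unfolding ws by (subst (1 2) walk_edges_append) (simp add: insert_commute)
  qed
qed

lemma walk_add_double_edges:
  assumes "\<forall>e\<in>#M. \<exists>u v. e = {u, v} \<and> u \<in> set ws \<and> v \<in> set ws"
  obtains ws' where "set ws' = set ws" and "mset (walk_edges ws') = mset (walk_edges ws) + M + M"
  using assms
proof (induction M arbitrary: thesis)
  case empty
  then show ?case by simp
next
  case (add e M)
  obtain ws1 where ws1: "set ws1 = set ws" "mset (walk_edges ws1) = mset (walk_edges ws) + M + M"
    using add.IH add.prems(2) by auto
  obtain u v where e: "e = {u, v}" "u \<in> set ws1" "v \<in> set ws1"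
    using add.prems(2) ws1(1) by auto
  obtain ws' where ws': "set ws' = insert v (set ws1)"
    "mset (walk_edges ws') = mset (walk_edges ws1) + {#{u, v}, {u, v}#}"
    using walk_detour[OF e(2)] .
  show ?case
    by (rule add.prems(1)[of ws']) (use ws' ws1 e in \<open>auto simp: insert_absorb\<close>)
qed

section \<open>Walks with prescribed edge multiplicities\<close>

lemma simple_graph_finite_edges: "simple_graph V E \<Longrightarrow> finite E"
proof -
  assume "simple_graph V E"
  then have "E \<subseteq> Pow V" "finite V" unfolding simple_graph_def by auto
  then show ?thesis by (meson finite_Pow_iff finite_subset)
qed

lemma simple_graph_edgeD: "simple_graph V E \<Longrightarrow> {u, v} \<in> E \<Longrightarrow> u \<in> V \<and> v \<in> V \<and> u \<noteq> v"
  unfolding simple_graph_def by (metis doubleton_eq_iff)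

lemma degree_le_max_degree: "finite V \<Longrightarrow> u \<in> V \<Longrightarrow> degree E u \<le> max_degree V E"
  unfolding max_degree_def by (intro Max_ge) auto

lemma max_degree_pos:
  assumes "simple_graph V E" "e \<in> E"
  shows "0 < max_degree V E"
proof -
  obtain u v where uv: "e = {u, v}" "u \<in> V"
    using assms unfolding simple_graph_def by blast
  have "finite {e \<in> E. u \<in> e}" using simple_graph_finite_edges[OF assms(1)] by simp
  with assms uv have "0 < degree E u" unfolding degree_def by (auto simp: card_gt_0_iff)
  also have "\<dots> \<le> max_degree V E"
    using assms(1) uv(2) by (intro degree_le_max_degree) (simp_all add: simple_graph_def)
  finally show ?thesis .
qed

lemma connected_graph_crossing_edge:
  assumes "connected_graph V E" "s \<in> S" "S \<subseteq> V" "w \<in> V - S"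
  obtains u v where "u \<in> S" "v \<notin> S" "{u, v} \<in> E"
proof -
  have "(s, w) \<in> {(x, y). adj E x y}\<^sup>*" using assms unfolding connected_graph_def by blast
  then have "w \<in> S \<or> (\<exists>u v. u \<in> S \<and> v \<notin> S \<and> {u, v} \<in> E)"
  proof (induction rule: rtrancl_induct)
    case base
    then show ?case using assms(2) by simp
  next
    case (step y z)
    then show ?case by (cases "y \<in> S"; cases "z \<in> S") (auto simp: adj_def)
  qed
  with assms(4) that show thesis by blast
qed

lemma spanning_walk_doubling_edges:
  assumes "simple_graph V E" "connected_graph V E"
  obtains ws T where "set ws = V" "T \<subseteq> E" "mset (walk_edges ws) = mset_set T + mset_set T"
proof -
  define P where "P ws \<longleftrightarrow> ws \<noteq> [] \<and> set ws \<subseteq> V \<and>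
    (\<exists>T \<subseteq> E. mset (walk_edges ws) = mset_set T + mset_set T)" for ws
  have fin: "finite V" "finite E"
    using assms(1) simple_graph_finite_edges[OF assms(1)] by (simp_all add: simple_graph_def)
  obtain r where "r \<in> V" using assms(2) unfolding connected_graph_def by blast
  then have "P [r]" unfolding P_def by (auto intro!: exI[of _ "{}"])
  moreover have "\<forall>ws. P ws \<longrightarrow> card (set ws) < Suc (card V)"
    unfolding P_def using fin(1) by (simp add: card_mono le_imp_less_Suc)
  ultimately obtain ws where ws: "P ws" and max: "\<forall>ws'. P ws' \<longrightarrow> card (set ws') \<le> card (set ws)"
    using ex_has_greatest_nat[of P "[r]" "\<lambda>ws. card (set ws)"] by blast
  obtain T where T: "T \<subseteq> E" "mset (walk_edges ws) = mset_set T + mset_set T"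
    using ws unfolding P_def by blast
  have "set ws = V"
  proof (rule ccontr)
    assume "set ws \<noteq> V"
    with ws obtain w where "w \<in> V - set ws" "hd ws \<in> set ws" "set ws \<subseteq> V"
      unfolding P_def by auto
    then obtain u v where uv: "u \<in> set ws" "v \<notin> set ws" "{u, v} \<in> E"
      using connected_graph_crossing_edge[OF assms(2)] by metis
    obtain ws' where ws': "set ws' = insert v (set ws)"
      "mset (walk_edges ws') = mset (walk_edges ws) + {#{u, v}, {u, v}#}"
      using walk_detour[OF uv(1)] .
    have finT: "finite T" using finite_subset[OF T(1) fin(2)] .
    have "T \<subseteq> set (walk_edges ws)"
      using T(2) finT by (simp flip: set_mset_mset)
    then have "{u, v} \<notin> T" using uv(2) walk_edges_subset by blast
    then have "mset (walk_edges ws') = mset_set (insert {u, v} T) + mset_set (insert {u, v} T)"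
      using ws'(2) T(2) finT by simp
    moreover have "ws' \<noteq> []" "set ws' \<subseteq> V" "insert {u, v} T \<subseteq> E"
      using ws ws'(1) uv(3) T(1) simple_graph_edgeD[OF assms(1) uv(3)] unfolding P_def by auto
    ultimately have "P ws'" unfolding P_def by blast
    moreover have "card (set ws') > card (set ws)" using ws'(1) uv(2) by simp
    ultimately show False using max by (meson not_le)
  qed
  with T that show thesis by blast
qed

lemma walk_with_edge_multiplicities:
  assumes "simple_graph V E" "connected_graph V E" "\<forall>e\<in>E. 0 < c e"
  obtains ws where "is_walk V E ws" "\<forall>e\<in>E. walk_edge_count ws e = 2 * c e"
proof -
  have finE: "finite E" using simple_graph_finite_edges[OF assms(1)] .
  obtain ws0 T where ws0: "set ws0 = V" "T \<subseteq> E"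
    "mset (walk_edges ws0) = mset_set T + mset_set T"
    using spanning_walk_doubling_edges[OF assms(1,2)] .
  define C where "C = (\<Sum>e\<in>E. replicate_mset (c e) e)"
  have count_C: "count C e = (if e \<in> E then c e else 0)" for e
    using finE by (simp add: C_def count_sum)
  have "count (mset_set T) e \<le> count C e" for e
    using ws0(2) assms(3) finite_subset[OF ws0(2) finE]
    by (cases "e \<in> T") (auto simp: count_C Suc_leI)
  then have "mset_set T \<subseteq># C" by (simp add: subseteq_mset_def)
  then have C: "mset_set T + (C - mset_set T) = C" by (rule subset_mset.add_diff_inverse)
  have "\<forall>e\<in>#C - mset_set T. \<exists>u v. e = {u, v} \<and> u \<in> set ws0 \<and> v \<in> set ws0"
  proof
    fix e assume "e \<in># C - mset_set T"
    then have "e \<in> E" using count_C by (metis in_diffD not_in_iff)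
    then show "\<exists>u v. e = {u, v} \<and> u \<in> set ws0 \<and> v \<in> set ws0"
      using assms(1) ws0(1) unfolding simple_graph_def by blast
  qed
  then obtain ws where ws: "set ws = V"
    "mset (walk_edges ws) = mset_set T + mset_set T + (C - mset_set T) + (C - mset_set T)"
    using walk_add_double_edges[of "C - mset_set T" ws0] unfolding ws0(1,3) by blast
  then have edges: "mset (walk_edges ws) = C + C" using C by (simp add: add_ac)
  show thesis
  proof
    have "set_mset C \<subseteq> E" using count_C by (metis count_eq_zero_iff subsetI)
    moreover have "ws \<noteq> []" using ws(1) assms(2) unfolding connected_graph_def by auto
    ultimately show "is_walk V E ws"
      using ws(1) unfolding is_walk_iff by (simp add: set_mset_mset[symmetric] edges del: set_mset_mset)
    show "\<forall>e\<in>E. walk_edge_count ws e = 2 * c e"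
      by (simp add: walk_edge_count_eq edges count_C)
  qed
qed

lemma irregularising_walk_of_proper_labelling:
  assumes "simple_graph V E" "connected_graph V E" "proper_labelling E l"
  obtains ws where "irregularising V E ws"
    "\<forall>e\<in>E. walk_edge_count ws e = 2 * max_degree V E * l e"
proof -
  let ?\<Delta> = "max_degree V E"
  have fin: "finite V" "finite E"
    using assms(1) simple_graph_finite_edges[OF assms(1)] by (simp_all add: simple_graph_def)
  have "\<forall>e\<in>E. 0 < ?\<Delta> * l e"
    using assms(3) max_degree_pos[OF assms(1)] by (auto simp: proper_labelling_def labelling_def)
  then obtain ws where ws: "is_walk V E ws" "\<forall>e\<in>E. walk_edge_count ws e = 2 * (?\<Delta> * l e)"
    using walk_with_edge_multiplicities[OF assms(1,2), of "\<lambda>e. ?\<Delta> * l e"] by metis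
  then have counts: "\<forall>e\<in>E. walk_edge_count ws e = 2 * ?\<Delta> * l e" by simp
  have plus_degree: "plus_walk_degree E ws w = degree E w + 2 * ?\<Delta> * sigma E l w" for w
    using walk_vertex_count_eq_mult_sigma[OF _ fin(2) counts] ws(1)
    by (simp add: plus_walk_degree_def is_walk_iff)
  have "plus_walk_degree E ws u \<noteq> plus_walk_degree E ws v" if uv: "{u, v} \<in> E" for u v
  proof
    assume eq: "plus_walk_degree E ws u = plus_walk_degree E ws v"
    have quotient: "sigma E l w = plus_walk_degree E ws w div (2 * ?\<Delta>)" if "w \<in> V" for w
    proof -
      have "degree E w \<le> ?\<Delta>" "0 < ?\<Delta>"
        using degree_le_max_degree[OF fin(1) that] max_degree_pos[OF assms(1) uv] .
      then have "degree E w < 2 * ?\<Delta>" by simp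
      then show ?thesis by (simp add: plus_degree)
    qed
    have "sigma E l u = sigma E l v"
      using quotient[of u] quotient[of v] eq simple_graph_edgeD[OF assms(1) uv] by argo
    with assms(3) uv show False unfolding proper_labelling_def by blast
  qed
  with ws(1) have "irregularising V E ws" unfolding irregularising_def by blast
  then show thesis using counts by (rule that)
qed

section \<open>The labelling induced by a walk\<close>

definition walk_labelling :: "'a list \<Rightarrow> 'a set \<Rightarrow> nat" where
  "walk_labelling ws e = walk_edge_count ws e + 1"

lemma sigma_walk_labelling:
  assumes "set (walk_edges ws) \<subseteq> E" "finite E"
  shows "sigma E (walk_labelling ws) u = plus_walk_degree E ws u"
  using walk_vertex_count_eq_sum[OF assms, of u]
  unfolding sigma_def walk_labelling_def sum.distrib by (simp add: plus_walk_degree_def degree_def)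

lemma proper_walk_labelling:
  assumes "irregularising V E ws" "finite E"
  shows "proper_labelling E (walk_labelling ws)"
  using assms sigma_walk_labelling[of ws E]
  by (simp add: irregularising_def is_walk_iff proper_labelling_def labelling_def walk_labelling_def)

lemma label_sum_walk_labelling:
  assumes "set (walk_edges ws) \<subseteq> E" "finite E"
  shows "label_sum E (walk_labelling ws) = walk_length ws + card E"
  using walk_length_eq_sum[OF assms] unfolding label_sum_def walk_labelling_def sum.distrib by simp

lemma walk_labelling_le:
  assumes "finite E" "e \<in> E"
  shows "walk_labelling ws e \<le> walk_max_edge E ws + 1"
  using assms by (simp add: walk_labelling_def walk_max_edge_def)

lemma vertex_sum_walk_labelling_le:
  assumes "set (walk_edges ws) \<subseteq> E" "finite V" "finite E"
  shows "vertex_sum V E (walk_labelling ws) \<le> walk_max_vertex V ws + max_degree V E"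
proof -
  have "sigma E (walk_labelling ws) u \<le> walk_max_vertex V ws + max_degree V E" if "u \<in> V" for u
  proof -
    have "walk_vertex_count ws u \<le> walk_max_vertex V ws"
      unfolding walk_max_vertex_def using assms(2) that by (intro Max_ge) auto
    moreover have "degree E u \<le> max_degree V E" using degree_le_max_degree[OF assms(2) that] .
    ultimately show ?thesis by (simp add: sigma_walk_labelling[OF assms(1,3)] plus_walk_degree_def)
  qed
  then show ?thesis unfolding vertex_sum_def using assms(2) by simp
qed

section \<open>Proper labellings of nice graphs\<close>

lemma is_K2_if_same_incident_edges:
  assumes "simple_graph V E" "connected_graph V E" "{u, v} \<in> E"
    and same: "\<forall>e\<in>E. u \<in> e \<longleftrightarrow> v \<in> e"
  shows "is_K2 V E"
proof -
  have uv: "u \<in> V" "v \<in> V" "u \<noteq> v" using simple_graph_edgeD[OF assms(1,3)] by auto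
  have edge: "e = {u, v}" if "e \<in> E" "u \<in> e \<or> v \<in> e" for e
  proof -
    obtain a b where "e = {a, b}" "a \<noteq> b"
      using assms(1) \<open>e \<in> E\<close> unfolding simple_graph_def by blast
    moreover have "u \<in> e" "v \<in> e" using that same by auto
    ultimately show ?thesis using uv(3) by fastforce
  qed
  have "V = {u, v}"
  proof
    show "V \<subseteq> {u, v}"
    proof
      fix w assume "w \<in> V"
      then have "(u, w) \<in> {(x, y). adj E x y}\<^sup>*"
        using assms(2) uv(1) unfolding connected_graph_def by blast
      then show "w \<in> {u, v}"
      proof (induction rule: rtrancl_induct)
        case (step y z)
        then have "{y, z} = {u, v}" by (intro edge) (auto simp: adj_def)
        then show ?case by auto
      qed simp
    qed
  qed (use uv in simp)
  moreover have "E = {{u, v}}"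
  proof
    show "E \<subseteq> {{u, v}}"
    proof
      fix e assume "e \<in> E"
      then obtain a b where "e = {a, b}" "a \<noteq> b" "a \<in> V" "b \<in> V"
        using assms(1) unfolding simple_graph_def by blast
      with \<open>e \<in> E\<close> \<open>V = {u, v}\<close> have "e = {u, v}" by (intro edge) auto
      then show "e \<in> {{u, v}}" by simp
    qed
  qed (use assms(3) in simp)
  ultimately show ?thesis using uv(3) by (simp add: is_K2_def)
qed

lemma nice_graph_proper_labelling:
  assumes "nice_graph V E"
  obtains l where "proper_labelling E l"
proof -
  have G: "simple_graph V E" "connected_graph V E" "\<not> is_K2 V E"
    using assms unfolding nice_graph_def by auto
  have finE: "finite E" using simple_graph_finite_edges[OF G(1)] .
  obtain f :: "'a set \<Rightarrow> nat" where f: "inj_on f E"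
    using finite_imp_inj_to_nat_seg[OF finE] by blast
  define l :: "'a set \<Rightarrow> nat" where "l e = 2 ^ f e" for e
  have sigma: "sigma E l w = set_encode (f ` {e \<in> E. w \<in> e})" for w
  proof -
    have "inj_on f {e \<in> E. w \<in> e}" using f by (rule inj_on_subset) auto
    then show ?thesis unfolding sigma_def set_encode_def l_def by (simp add: sum.reindex)
  qed
  have "sigma E l u \<noteq> sigma E l v" if uv: "{u, v} \<in> E" for u v
  proof
    assume "sigma E l u = sigma E l v"
    then have "f ` {e \<in> E. u \<in> e} = f ` {e \<in> E. v \<in> e}"
      using finE by (simp add: sigma set_encode_eq)
    then have "{e \<in> E. u \<in> e} = {e \<in> E. v \<in> e}"
      using inj_on_image_eq_iff[OF f] by blast
    then have "is_K2 V E" using is_K2_if_same_incident_edges[OF G(1,2) uv] by blast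
    with G(3) show False ..
  qed
  then have "proper_labelling E l" by (simp add: proper_labelling_def labelling_def l_def)
  then show thesis by (rule that)
qed

lemma nice_graph_irregularising_walk:
  assumes "nice_graph V E"
  obtains ws where "irregularising V E ws"
proof -
  have G: "simple_graph V E" "connected_graph V E" using assms unfolding nice_graph_def by auto
  obtain l where "proper_labelling E l" using nice_graph_proper_labelling[OF assms] .
  then show thesis using irregularising_walk_of_proper_labelling[OF G] that by blast
qed

section \<open>Walk parameters versus labelling parameters\<close>

lemma Least_value_attained:
  fixes f :: "'b \<Rightarrow> nat"
  assumes "P a"
  obtains b where "P b" "f b = (LEAST n. \<exists>b. P b \<and> f b = n)"
  using LeastI_ex[of "\<lambda>n. \<exists>b. P b \<and> f b = n"] assms that by blast

lemma min_label_sum_le_min_len_W: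
  assumes "nice_graph V E"
  shows "min_label_sum E \<le> min_len_W V E + card E"
proof -
  have finE: "finite E" using assms simple_graph_finite_edges unfolding nice_graph_def by blast
  obtain ws0 where "irregularising V E ws0" using nice_graph_irregularising_walk[OF assms] .
  then obtain ws where ws: "irregularising V E ws" "walk_length ws = min_len_W V E"
    using Least_value_attained[of "irregularising V E" ws0 walk_length]
    unfolding min_len_W_def by blast
  then have edges: "set (walk_edges ws) \<subseteq> E" by (simp add: irregularising_def is_walk_iff)
  have "min_label_sum E \<le> label_sum E (walk_labelling ws)"
    unfolding min_label_sum_def using proper_walk_labelling[OF ws(1) finE] by (intro Least_le) blast
  also have "\<dots> = min_len_W V E + card E"
    using label_sum_walk_labelling[OF edges finE] ws(2) by simp
  finally show ?thesis .
qed

lemma min_len_W_le_min_label_sum: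
  assumes "nice_graph V E"
  shows "min_len_W V E \<le> 2 * max_degree V E * min_label_sum E"
proof -
  have G: "simple_graph V E" "connected_graph V E" using assms unfolding nice_graph_def by auto
  have finE: "finite E" using simple_graph_finite_edges[OF G(1)] .
  obtain l0 where "proper_labelling E l0" using nice_graph_proper_labelling[OF assms] .
  then obtain l where l: "proper_labelling E l" "label_sum E l = min_label_sum E"
    using Least_value_attained[of "proper_labelling E" l0 "label_sum E"]
    unfolding min_label_sum_def by blast
  obtain ws where ws: "irregularising V E ws"
    "\<forall>e\<in>E. walk_edge_count ws e = 2 * max_degree V E * l e"
    using irregularising_walk_of_proper_labelling[OF G l(1)] .
  then have edges: "set (walk_edges ws) \<subseteq> E" by (simp add: irregularising_def is_walk_iff)
  have "min_len_W V E \<le> walk_length ws"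
    unfolding min_len_W_def using ws(1) by (intro Least_le) blast
  also have "\<dots> = 2 * max_degree V E * min_label_sum E"
    using walk_length_eq_mult_label_sum[OF edges finE ws(2)] l(2) by simp
  finally show ?thesis .
qed

lemma chi_s_le_min_edge_W:
  assumes "nice_graph V E"
  shows "chi_s E \<le> min_edge_W V E + 1"
proof -
  have finE: "finite E" using assms simple_graph_finite_edges unfolding nice_graph_def by blast
  obtain ws0 where "irregularising V E ws0" using nice_graph_irregularising_walk[OF assms] .
  then obtain ws where ws: "irregularising V E ws" "walk_max_edge E ws = min_edge_W V E"
    using Least_value_attained[of "irregularising V E" ws0 "walk_max_edge E"]
    unfolding min_edge_W_def by blast
  have "proper_labelling E (walk_labelling ws)" using proper_walk_labelling[OF ws(1) finE] .
  moreover have "\<forall>e\<in>E. walk_labelling ws e \<le> min_edge_W V E + 1"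
    using walk_labelling_le[OF finE, of _ ws] unfolding ws(2) by blast
  ultimately show ?thesis unfolding chi_s_def by (intro Least_le) blast
qed

lemma min_edge_W_le_chi_s:
  assumes "nice_graph V E"
  shows "min_edge_W V E \<le> 2 * max_degree V E * chi_s E"
proof -
  have G: "simple_graph V E" "connected_graph V E" using assms unfolding nice_graph_def by auto
  have finE: "finite E" using simple_graph_finite_edges[OF G(1)] .
  obtain l0 where l0: "proper_labelling E l0" using nice_graph_proper_labelling[OF assms] .
  have "\<forall>e\<in>E. l0 e \<le> label_sum E l0"
    unfolding label_sum_def using finE by (simp add: member_le_sum)
  with l0 have "\<exists>k l. proper_labelling E l \<and> (\<forall>e\<in>E. l e \<le> k)" by blast
  then have "\<exists>l. proper_labelling E l \<and> (\<forall>e\<in>E. l e \<le> chi_s E)"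
    unfolding chi_s_def by (rule LeastI_ex)
  then obtain l where l: "proper_labelling E l" "\<forall>e\<in>E. l e \<le> chi_s E" by blast
  obtain ws where ws: "irregularising V E ws"
    "\<forall>e\<in>E. walk_edge_count ws e = 2 * max_degree V E * l e"
    using irregularising_walk_of_proper_labelling[OF G l(1)] .
  have "min_edge_W V E \<le> walk_max_edge E ws"
    unfolding min_edge_W_def using ws(1) by (intro Least_le) blast
  also have "\<dots> \<le> 2 * max_degree V E * chi_s E"
    unfolding walk_max_edge_def using finE ws(2) l(2) by simp
  finally show ?thesis .
qed

lemma min_vertex_sum_le_min_vert_W:
  assumes "nice_graph V E"
  shows "min_vertex_sum V E \<le> min_vert_W V E + max_degree V E"
proof -
  have finV: "finite V" and finE: "finite E"
    using assms simple_graph_finite_edges unfolding nice_graph_def simple_graph_def by blast+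
  obtain ws0 where "irregularising V E ws0" using nice_graph_irregularising_walk[OF assms] .
  then obtain ws where ws: "irregularising V E ws" "walk_max_vertex V ws = min_vert_W V E"
    using Least_value_attained[of "irregularising V E" ws0 "walk_max_vertex V"]
    unfolding min_vert_W_def by blast
  then have edges: "set (walk_edges ws) \<subseteq> E" by (simp add: irregularising_def is_walk_iff)
  have "min_vertex_sum V E \<le> vertex_sum V E (walk_labelling ws)"
    unfolding min_vertex_sum_def using proper_walk_labelling[OF ws(1) finE]
    by (intro Least_le) blast
  also have "\<dots> \<le> min_vert_W V E + max_degree V E"
    using vertex_sum_walk_labelling_le[OF edges finV finE] ws(2) by simp
  finally show ?thesis .
qed

lemma min_vert_W_le_min_vertex_sum:
  assumes "nice_graph V E"
  shows "min_vert_W V E \<le> 2 * max_degree V E * min_vertex_sum V E"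
proof -
  have G: "simple_graph V E" "connected_graph V E" using assms unfolding nice_graph_def by auto
  have finV: "finite V" and finE: "finite E"
    using G(1) simple_graph_finite_edges[OF G(1)] unfolding simple_graph_def by blast+
  obtain l0 where "proper_labelling E l0" using nice_graph_proper_labelling[OF assms] .
  then obtain l where l: "proper_labelling E l" "vertex_sum V E l = min_vertex_sum V E"
    using Least_value_attained[of "proper_labelling E" l0 "vertex_sum V E"]
    unfolding min_vertex_sum_def by blast
  obtain ws where ws: "irregularising V E ws"
    "\<forall>e\<in>E. walk_edge_count ws e = 2 * max_degree V E * l e"
    using irregularising_walk_of_proper_labelling[OF G l(1)] .
  then have edges: "set (walk_edges ws) \<subseteq> E" by (simp add: irregularising_def is_walk_iff)
  have "walk_vertex_count ws u \<le> 2 * max_degree V E * min_vertex_sum V E" if "u \<in> V" for u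
  proof -
    have "sigma E l u \<le> vertex_sum V E l"
      unfolding vertex_sum_def using finV that by (intro Max_ge) auto
    then show ?thesis
      using walk_vertex_count_eq_mult_sigma[OF edges finE ws(2)] l(2) by simp
  qed
  then have "walk_max_vertex V ws \<le> 2 * max_degree V E * min_vertex_sum V E"
    unfolding walk_max_vertex_def using finV by simp
  moreover have "min_vert_W V E \<le> walk_max_vertex V ws"
    unfolding min_vert_W_def using ws(1) by (intro Least_le) blast
  ultimately show ?thesis by linarith
qed

theorem theorem4p3:
  fixes V :: "'a set" and E :: "'a set set"
  assumes "nice_graph V E"
  defines "m \<equiv> card E" and "\<Delta> \<equiv> max_degree V E"
  shows "(min_label_sum E \<le> min_len_W V E + m \<and>
          min_len_W V E + m \<le> 3 * (m + \<Delta> * min_label_sum E))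
       \<and> (chi_s E \<le> min_edge_W V E + 1 \<and> min_edge_W V E + 1 \<le> 3 * (1 + \<Delta> * chi_s E))
       \<and> (min_vertex_sum V E \<le> min_vert_W V E + \<Delta> \<and>
          min_vert_W V E + \<Delta> \<le> 3 * \<Delta> * (1 + min_vertex_sum V E))"
  using min_label_sum_le_min_len_W[OF assms(1)] min_len_W_le_min_label_sum[OF assms(1)]
    chi_s_le_min_edge_W[OF assms(1)] min_edge_W_le_chi_s[OF assms(1)]
    min_vertex_sum_le_min_vert_W[OF assms(1)] min_vert_W_le_min_vertex_sum[OF assms(1)]
  unfolding m_def \<Delta>_def by (simp add: algebra_simps)

end
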